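(* For each of the three games with payoff matrices $$A_1=\begin{pmatrix}0&-3&3\\2&0&-2\\-1&1&0\end{pmatrix},\quad A_2=\begin{pmatrix}0&-2&3\\2&0&-1\\-3&1&0\end{pmatrix},\quad A_3=\begin{pmatrix}0&-1&3\\2&0&-3\\-2&1&0\end{pmatrix},$$ the IBR dynamics has a unique rest point in the interior of $\Delta$, and this rest point is repelling: the Jacobian of the dynamics restricted to $\Delta$ (in two affine coordinates) at this rest point has two eigenvalues with positive real parts. For $A_1$ the interior rest point is $(\tfrac13,\tfrac13,\tfrac13)$ and the eigenvalues are $\frac{1\pm 2i\sqrt{26}}{27}$.
   Context: Let $n\ge 2$ and consider a symmetric two-player game with strategy set $S=\{1,\dots,n\}$ and payoff matrix $A=(\pi_{ij})_{i,j\in S}$, where $\pi_{ij}\in\mathbb{R}$ is the payoff of a player using strategy $i$ against an opponent using strategy $j$. The state space is the simplex $\Delta=\{x\in\mathbb{R}^n: x_i\ge 0,\ \sum_i x_i=1\}$, where $x_i$ is the population share using strategy $i$. The imitate-the-better-realization (IBR) dynamics is the ODE on $\Delta$ $$\dot x_i = x_i\sum_{j=1}^n\sum_{k=1}^n\sum_{m=1}^n x_jx_kx_m\big(\mathbf 1\{\pi_{jk}<\pi_{im}\}-\mathbf 1\{\pi_{jk}>\pi_{im}\}\big),\quad i\in S.$$ Here $n=3$. *)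

theory Defs
  imports "HOL-Analysis.Analysis"
begin

text \<open>Strategies 1,2,3 are the indices of the numeral type 3 (components x$1, x$2, x$3).
  A payoff matrix is A :: real^3^3 with A$i$j the payoff of strategy i against j.\<close>

definition ibr :: "real^3^3 \<Rightarrow> real^3 \<Rightarrow> real^3" where
  "ibr A x = (\<chi> i. x$i * (\<Sum>j\<in>UNIV. \<Sum>k\<in>UNIV. \<Sum>m\<in>UNIV.
       x$j * x$k * x$m *
       ((if A$j$k < A$i$m then 1 else 0) - (if A$j$k > A$i$m then 1 else 0))))"

definition simplex_interior :: "real^3 \<Rightarrow> bool" where
  "simplex_interior x \<longleftrightarrow> (\<forall>i. x$i > 0) \<and> (\<Sum>i\<in>UNIV. x$i) = 1"

definition rest_point :: "real^3^3 \<Rightarrow> real^3 \<Rightarrow> bool" where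
  "rest_point A x \<longleftrightarrow> ibr A x = 0"

definition lift :: "real^2 \<Rightarrow> real^3" where
  "lift y = vector [y$1, y$2, 1 - y$1 - y$2]"

definition coords :: "real^3 \<Rightarrow> real^2" where
  "coords x = vector [x$1, x$2]"

definition ibr_aff :: "real^3^3 \<Rightarrow> real^2 \<Rightarrow> real^2" where
  "ibr_aff A y = vector [ibr A (lift y) $ 1, ibr A (lift y) $ 2]"

definition cmat :: "real^2^2 \<Rightarrow> complex^2^2" where
  "cmat J = (\<chi> i j. complex_of_real (J$i$j))"

definition is_eigenvalue :: "real^2^2 \<Rightarrow> complex \<Rightarrow> bool" where
  "is_eigenvalue J z \<longleftrightarrow> (\<exists>v::complex^2. v \<noteq> 0 \<and> cmat J *v v = z *s v)"

definition is_jacobian_at :: "real^3^3 \<Rightarrow> real^3 \<Rightarrow> real^2^2 \<Rightarrow> bool" where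
  "is_jacobian_at A x J \<longleftrightarrow> (ibr_aff A has_derivative (\<lambda>h. J *v h)) (at (coords x))"

definition repelling :: "real^3^3 \<Rightarrow> real^3 \<Rightarrow> bool" where
  "repelling A x \<longleftrightarrow> (\<exists>J. is_jacobian_at A x J \<and> (\<forall>z. is_eigenvalue J z \<longrightarrow> Re z > 0))"

definition A1 :: "real^3^3" where
  "A1 = vector [vector [0, -3, 3], vector [2, 0, -2], vector [-1, 1, 0]]"
definition A2 :: "real^3^3" where
  "A2 = vector [vector [0, -2, 3], vector [2, 0, -1], vector [-3, 1, 0]]"
definition A3 :: "real^3^3" where
  "A3 = vector [vector [0, -1, 3], vector [2, 0, -3], vector [-2, 1, 0]]"

end

(*
  The IBR field has the form x_i r_i(x), where r_i is a cubic form whose coefficients are signs of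
  payoff differences sgn (A i m - A j k). These signs are antisymmetric under exchanging the pairs
  (i, m) and (j, k), so the weighted sum of the r_i vanishes and the simplex is invariant. Interior
  rest points are therefore the positive common zeros of r_1 and r_2 at (u, v, 1), with u = x1/x3
  and v = x2/x3; since r_i and the Jacobian are homogeneous, repulsion can be read off at (u, v, 1),
  and a 2 x 2 Jacobian with positive trace and determinant has eigenvalues with positive real parts.

  For A1 the rates factor, and (1, 1) is their only positive common zero. For A2 and A3 an
  invertible polynomial transformation turns (r_1, r_2) into a resultant R(v) and a polynomial linear
  in u. R has a single sign change in its coefficients, hence a single positive root, which a sign
  change of R brackets in a short interval; bounds on the coefficients of polynomials expanded on a
  small box then locate u and show that trace and determinant are positive there.
*)

theory Submission
  imports Defs "HOL-Computational_Algebra.Polynomial"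
begin

section \<open>Growth rates\<close>

definition ibr_rate :: "real^3^3 \<Rightarrow> 3 \<Rightarrow> real^3 \<Rightarrow> real" where
  "ibr_rate A i x = (\<Sum>j\<in>UNIV. \<Sum>k\<in>UNIV. \<Sum>m\<in>UNIV. x$j * x$k * x$m * sgn (A$i$m - A$j$k))"

lemma sgn_diff_eq_indicators:
  "sgn (b - a) = (if a < b then 1 else 0) - (if a > b then 1 else (0::real))"
  by (simp add: sgn_if)

lemma ibr_eq_rate: "ibr A x = (\<chi> i. x$i * ibr_rate A i x)"
  by (simp add: ibr_def ibr_rate_def sgn_diff_eq_indicators)

lemma ibr_rate_scale: "ibr_rate A i (c *s x) = c^3 * ibr_rate A i x"
  by (simp add: ibr_rate_def sum_distrib_left power3_eq_cube mult_ac)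

lemma sum_weighted_ibr_rate: "(\<Sum>i\<in>UNIV. x$i * ibr_rate A i x) = 0"
proof -
  define g where "g p q = x$fst p * x$snd p * x$fst q * x$snd q * sgn (A$fst p$snd p - A$fst q$snd q)"
    for p q :: "3 \<times> 3"
  have g_swap: "g q p = - g p q" for p q
    using sgn_minus[of "A$fst p$snd p - A$fst q$snd q"] by (simp add: g_def mult_ac)
  have rate_reordered:
    "ibr_rate A i x = (\<Sum>m\<in>UNIV. \<Sum>j\<in>UNIV. \<Sum>k\<in>UNIV. x$j * x$k * x$m * sgn (A$i$m - A$j$k))" for i
  proof -
    have "ibr_rate A i x = (\<Sum>j\<in>UNIV. \<Sum>m\<in>UNIV. \<Sum>k\<in>UNIV. x$j * x$k * x$m * sgn (A$i$m - A$j$k))"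
      unfolding ibr_rate_def by (rule sum.cong[OF refl]) (rule sum.swap)
    also have "\<dots> = (\<Sum>m\<in>UNIV. \<Sum>j\<in>UNIV. \<Sum>k\<in>UNIV. x$j * x$k * x$m * sgn (A$i$m - A$j$k))"
      by (rule sum.swap)
    finally show ?thesis .
  qed
  have pairs: "(\<Sum>p\<in>UNIV. h p) = (\<Sum>i\<in>UNIV. \<Sum>m\<in>UNIV. h (i, m))" for h :: "3 \<times> 3 \<Rightarrow> real"
    using sum.cartesian_product[of "\<lambda>i m. h (i, m)" UNIV UNIV] by simp
  have weighted_sum_eq: "(\<Sum>i\<in>UNIV. x$i * ibr_rate A i x) = (\<Sum>p\<in>UNIV. \<Sum>q\<in>UNIV. g p q)"
    unfolding pairs g_def rate_reordered by (simp add: sum_distrib_left mult_ac)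
  have "(\<Sum>p\<in>UNIV. \<Sum>q\<in>UNIV. g p q) = (\<Sum>q\<in>UNIV. \<Sum>p\<in>UNIV. g p q)"
    by (fact sum.swap)
  also have "\<dots> = (\<Sum>q\<in>UNIV. \<Sum>p\<in>UNIV. - g q p)"
    by (intro sum.cong refl g_swap)
  also have "\<dots> = - (\<Sum>p\<in>UNIV. \<Sum>q\<in>UNIV. g p q)"
    by (simp add: sum_negf)
  finally have "(\<Sum>p\<in>UNIV. \<Sum>q\<in>UNIV. g p q) = 0" by simp
  with weighted_sum_eq show ?thesis by simp
qed

section \<open>The Jacobian in affine coordinates\<close>

definition simplex_tangent :: "real^2 \<Rightarrow> real^3" where
  "simplex_tangent h = vector [h$1, h$2, - h$1 - h$2]"

definition ibr_rate_deriv :: "real^3^3 \<Rightarrow> 3 \<Rightarrow> real^3 \<Rightarrow> real^3 \<Rightarrow> real" where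
  "ibr_rate_deriv A i x d = (\<Sum>j\<in>UNIV. \<Sum>k\<in>UNIV. \<Sum>m\<in>UNIV.
     (d$j * x$k * x$m + x$j * d$k * x$m + x$j * x$k * d$m) * sgn (A$i$m - A$j$k))"

definition ibr_deriv :: "real^3^3 \<Rightarrow> real^3 \<Rightarrow> real^3 \<Rightarrow> real^3" where
  "ibr_deriv A x d = (\<chi> i. d$i * ibr_rate A i x + x$i * ibr_rate_deriv A i x d)"

definition ibr_jacobian :: "real^3^3 \<Rightarrow> real^3 \<Rightarrow> real^2^2" where
  "ibr_jacobian A x = matrix (\<lambda>h. coords (ibr_deriv A x (simplex_tangent h)))"

lemma has_derivative_vec_nth [derivative_intros]: "((\<lambda>x. x $ i) has_derivative (\<lambda>h. h $ i)) F"
  by (rule bounded_linear_imp_has_derivative[OF bounded_linear_vec_nth])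

lemma has_derivative_ibr_rate:
  "(ibr_rate A i has_derivative ibr_rate_deriv A i x) (at x within S)"
  unfolding ibr_rate_def[abs_def] ibr_rate_deriv_def
  by (rule derivative_eq_intros refl | simp)+ (simp add: algebra_simps sum.distrib)

lemma has_derivative_vec_componentwise:
  fixes f :: "'a::real_normed_vector \<Rightarrow> real^'n"
  assumes "\<And>i. ((\<lambda>x. f x $ i) has_derivative (\<lambda>h. f' h $ i)) (at a within S)"
  shows "(f has_derivative f') (at a within S)"
proof (rule has_derivative_componentwise_within[THEN iffD2], rule ballI)
  fix b :: "real^'n" assume "b \<in> Basis"
  then obtain i where "b = axis i 1" using axis_inverse by blast
  then show "((\<lambda>x. f x \<bullet> b) has_derivative (\<lambda>h. f' h \<bullet> b)) (at a within S)"
    using assms[of i] by (simp add: inner_axis)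
qed

lemma has_derivative_ibr: "(ibr A has_derivative ibr_deriv A x) (at x within S)"
proof (rule has_derivative_vec_componentwise)
  fix i
  show "((\<lambda>y. ibr A y $ i) has_derivative (\<lambda>d. ibr_deriv A x d $ i)) (at x within S)"
    unfolding ibr_eq_rate ibr_deriv_def
    by (rule derivative_eq_intros has_derivative_ibr_rate refl | simp add: fun_eq_iff)+
qed

lemma bounded_linear_simplex_tangent: "bounded_linear simplex_tangent"
  unfolding linear_conv_bounded_linear[symmetric]
  by (rule linearI) (simp_all add: simplex_tangent_def vec_eq_iff forall_3 algebra_simps)

lemma has_derivative_lift: "(lift has_derivative simplex_tangent) F"
proof -
  have lift_eq: "lift = (\<lambda>y. simplex_tangent y + vector [0, 0, 1])"
    by (simp add: fun_eq_iff lift_def simplex_tangent_def vec_eq_iff forall_3)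
  show ?thesis
    unfolding lift_eq
    by (intro has_derivative_add_const bounded_linear_imp_has_derivative bounded_linear_simplex_tangent)
qed

lemma bounded_linear_coords: "bounded_linear coords"
  unfolding linear_conv_bounded_linear[symmetric]
  by (rule linearI) (simp_all add: coords_def vec_eq_iff forall_2)

lemma is_jacobian_at_ibr_jacobian:
  assumes "(\<Sum>i\<in>UNIV. x$i) = 1"
  shows "is_jacobian_at A x (ibr_jacobian A x)"
proof -
  define L where "L h = coords (ibr_deriv A x (simplex_tangent h))" for h
  have "lift (coords x) = x"
    using assms by (simp add: lift_def coords_def vec_eq_iff forall_3 sum_3 algebra_simps)
  then have "((\<lambda>y. ibr A (lift y)) has_derivative (\<lambda>h. ibr_deriv A x (simplex_tangent h))) (at (coords x))"
    using has_derivative_compose[OF has_derivative_lift[of "at (coords x)"]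
        has_derivative_ibr[of A "lift (coords x)" UNIV]] by simp
  moreover have "ibr_aff A = (\<lambda>y. coords (ibr A (lift y)))"
    by (simp add: fun_eq_iff ibr_aff_def coords_def)
  ultimately have deriv: "(ibr_aff A has_derivative L) (at (coords x))"
    unfolding L_def using bounded_linear.has_derivative[OF bounded_linear_coords] by simp
  then have "(\<lambda>h. ibr_jacobian A x *v h) = L"
    unfolding ibr_jacobian_def L_def[symmetric]
    using has_derivative_linear matrix_works by fastforce
  with deriv show ?thesis
    unfolding is_jacobian_at_def by simp
qed

lemma ibr_rate_deriv_scale: "ibr_rate_deriv A i (c *s x) d = c^2 * ibr_rate_deriv A i x d"
  by (simp add: ibr_rate_deriv_def sum_distrib_left power2_eq_square algebra_simps)

lemma ibr_deriv_scale: "ibr_deriv A (c *s x) d = c^3 *s ibr_deriv A x d"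
  by (simp add: ibr_deriv_def vec_eq_iff ibr_rate_scale ibr_rate_deriv_scale power2_eq_square
      power3_eq_cube algebra_simps)

lemma ibr_jacobian_scale: "ibr_jacobian A (c *s x) = c^3 *\<^sub>R ibr_jacobian A x"
  by (simp add: ibr_jacobian_def matrix_def ibr_deriv_scale coords_def vec_eq_iff forall_2)

section \<open>Eigenvalues of real 2 \<times> 2 matrices\<close>

lemma eigenvalue_imp_char_poly_root:
  fixes J :: "real^2^2"
  assumes "is_eigenvalue J z"
  shows "z^2 - of_real (trace J) * z + of_real (det J) = 0"
proof -
  obtain v :: "complex^2" where "v \<noteq> 0" and v: "cmat J *v v = z *s v"
    using assms unfolding is_eigenvalue_def by blast
  define a b c d where "a = complex_of_real (J$1$1)" and "b = complex_of_real (J$1$2)"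
    and "c = complex_of_real (J$2$1)" and "d = complex_of_real (J$2$2)"
  have eq1: "a * v$1 + b * v$2 = z * v$1" and eq2: "c * v$1 + d * v$2 = z * v$2"
    using v unfolding vec_eq_iff forall_2
    by (auto simp: matrix_vector_mult_def sum_2 cmat_def a_def b_def c_def d_def)
  \<comment> \<open>multiply by the adjugate of J - z\<close>
  have "((a - z) * (d - z) - b * c) * v$1 = (d - z) * (a * v$1 + b * v$2 - z * v$1) - b * (c * v$1 + d * v$2 - z * v$2)"
       "((a - z) * (d - z) - b * c) * v$2 = (a - z) * (c * v$1 + d * v$2 - z * v$2) - c * (a * v$1 + b * v$2 - z * v$1)"
    by (simp_all add: algebra_simps)
  moreover have "v$1 \<noteq> 0 \<or> v$2 \<noteq> 0"
    using \<open>v \<noteq> 0\<close> unfolding vec_eq_iff forall_2 by auto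
  ultimately have "(a - z) * (d - z) - b * c = 0"
    using eq1 eq2 by auto
  then show ?thesis
    by (simp add: trace_def sum_2 det_2 a_def b_def c_def d_def algebra_simps power2_eq_square)
qed

lemma is_eigenvalue_iff_char_poly_root:
  fixes J :: "real^2^2"
  assumes "J$1$2 \<noteq> 0"
  shows "is_eigenvalue J z \<longleftrightarrow> z^2 - of_real (trace J) * z + of_real (det J) = 0"
proof
  assume root: "z^2 - of_real (trace J) * z + of_real (det J) = 0"
  define v :: "complex^2" where "v = vector [of_real (J$1$2), z - of_real (J$1$1)]"
  have "v \<noteq> 0"
    using assms(1) unfolding v_def vec_eq_iff forall_2 by auto
  moreover have "cmat J *v v = z *s v"
    unfolding vec_eq_iff forall_2
  proof
    show "(cmat J *v v) $ 1 = (z *s v) $ 1"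
      by (simp add: matrix_vector_mult_def sum_2 cmat_def v_def algebra_simps)
    have "(cmat J *v v) $ 2 - (z *s v) $ 2 = - (z^2 - of_real (trace J) * z + of_real (det J))"
      by (simp add: matrix_vector_mult_def sum_2 cmat_def v_def trace_def det_2 algebra_simps power2_eq_square)
    with root show "(cmat J *v v) $ 2 = (z *s v) $ 2"
      by simp
  qed
  ultimately show "is_eigenvalue J z"
    unfolding is_eigenvalue_def by blast
qed (rule eigenvalue_imp_char_poly_root)

lemma eigenvalue_Re_pos:
  fixes J :: "real^2^2"
  assumes "0 < trace J" and "0 < det J" and "is_eigenvalue J z"
  shows "0 < Re z"
proof -
  have root: "z^2 - of_real (trace J) * z + of_real (det J) = 0"
    using eigenvalue_imp_char_poly_root[OF assms(3)] .
  have re: "Re z ^ 2 - Im z ^ 2 - trace J * Re z + det J = 0"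
    and im: "(2 * Re z - trace J) * Im z = 0"
    using arg_cong[OF root, of Re] arg_cong[OF root, of Im]
    by (simp_all add: power2_eq_square algebra_simps)
  show ?thesis
  proof (cases "Im z = 0")
    case True
    with re have "Re z ^ 2 + det J = trace J * Re z" by simp
    then show ?thesis
      using assms(1,2) by (smt (verit) mult_nonneg_nonpos zero_le_power2)
  next
    case False
    with im have "2 * Re z = trace J" by simp
    with assms(1) show ?thesis by simp
  qed
qed

section \<open>Interior rest points\<close>

definition ratio_point :: "real \<Rightarrow> real \<Rightarrow> real^3" where
  "ratio_point u v = (1 / (u + v + 1)) *s vector [u, v, 1]"

lemma rest_point_iff_ibr_rate:
  assumes "simplex_interior x"
  shows "rest_point A x \<longleftrightarrow> (\<forall>i. ibr_rate A i x = 0)"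
  using assms by (auto simp: simplex_interior_def rest_point_def ibr_eq_rate vec_eq_iff
      dest: less_imp_neq[symmetric])

lemma interior_rest_point_iff:
  "simplex_interior x \<and> rest_point A x \<longleftrightarrow>
     (\<exists>u v. 0 < u \<and> 0 < v \<and> ibr_rate A 1 (vector [u, v, 1]) = 0 \<and>
            ibr_rate A 2 (vector [u, v, 1]) = 0 \<and> x = ratio_point u v)"
  (is "?lhs \<longleftrightarrow> ?rhs")
proof
  assume ?lhs
  then have pos: "\<And>i. 0 < x$i" and sum: "x$1 + x$2 + x$3 = 1"
    by (auto simp: simplex_interior_def sum_3)
  then have rates: "\<And>i. ibr_rate A i x = 0"
    using \<open>?lhs\<close> rest_point_iff_ibr_rate[of x A] by blast
  define u v where "u = x$1 / x$3" and "v = x$2 / x$3"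
  have "0 < u" "0 < v"
    using pos by (simp_all add: u_def v_def)
  have x_eq: "x = x$3 *s vector [u, v, 1]"
    using pos[of 3] by (simp add: u_def v_def vec_eq_iff forall_3)
  have "ibr_rate A i (vector [u, v, 1]) = 0" for i
    using rates[of i] pos[of 3] ibr_rate_scale[of A i "x$3" "vector [u, v, 1]"] x_eq by simp
  moreover have "x = ratio_point u v"
  proof -
    have "u + v + 1 = 1 / x$3"
      using sum pos[of 3] by (simp add: u_def v_def field_simps)
    then have x3: "1 / (u + v + 1) = x$3"
      by simp
    show ?thesis
      unfolding ratio_point_def x3 by (fact x_eq)
  qed
  ultimately show ?rhs
    using \<open>0 < u\<close> \<open>0 < v\<close> by blast
next
  assume ?rhs
  then obtain u v where "0 < u" "0 < v" and rate1: "ibr_rate A 1 (vector [u, v, 1]) = 0"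
    and rate2: "ibr_rate A 2 (vector [u, v, 1]) = 0" and x_eq: "x = ratio_point u v"
    by blast
  have rate3: "ibr_rate A 3 (vector [u, v, 1]) = 0"
    using sum_weighted_ibr_rate[of "vector [u, v, 1]" A] rate1 rate2 by (simp add: sum_3)
  define c where "c = 1 / (u + v + 1)"
  have "0 < c"
    using \<open>0 < u\<close> \<open>0 < v\<close> by (simp add: c_def)
  have "c * u + c * v + c * 1 = c * (u + v + 1)"
    by (simp add: algebra_simps)
  also have "\<dots> = 1"
    using \<open>0 < u\<close> \<open>0 < v\<close> by (simp add: c_def)
  finally have "c * u + c * v + c * 1 = 1" .
  then have "simplex_interior x"
    using \<open>0 < c\<close> \<open>0 < u\<close> \<open>0 < v\<close>
    by (simp add: x_eq ratio_point_def c_def[symmetric] simplex_interior_def forall_3 sum_3)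
  moreover have "ibr_rate A i x = 0" for i
    using rate1 rate2 rate3 exhaust_3[of i]
    by (auto simp: x_eq ratio_point_def ibr_rate_scale)
  ultimately show ?lhs
    using rest_point_iff_ibr_rate[of x A] by blast
qed

lemma unique_repelling_interior_rest_point:
  assumes "0 < u0" and "0 < v0"
    and zeros: "\<And>u v. 0 < u \<Longrightarrow> 0 < v \<Longrightarrow>
        ibr_rate A 1 (vector [u, v, 1]) = 0 \<and> ibr_rate A 2 (vector [u, v, 1]) = 0 \<longleftrightarrow> u = u0 \<and> v = v0"
    and trace_pos: "0 < trace (ibr_jacobian A (vector [u0, v0, 1]))"
    and det_pos: "0 < det (ibr_jacobian A (vector [u0, v0, 1]))"
  shows "(\<exists>!x. simplex_interior x \<and> rest_point A x) \<and>
         (\<forall>x. simplex_interior x \<and> rest_point A x \<longrightarrow> repelling A x)"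
proof -
  have rest_points: "simplex_interior x \<and> rest_point A x \<longleftrightarrow> x = ratio_point u0 v0" for x
    using assms(1,2) zeros by (auto simp: interior_rest_point_iff)
  define c where "c = 1 / (u0 + v0 + 1)"
  have "0 < c"
    using assms(1,2) by (simp add: c_def)
  let ?J = "ibr_jacobian A (ratio_point u0 v0)"
  have J_eq: "?J = c^3 *\<^sub>R ibr_jacobian A (vector [u0, v0, 1])"
    by (simp add: ratio_point_def c_def ibr_jacobian_scale)
  have "0 < trace ?J"
    using trace_pos \<open>0 < c\<close> by (simp add: J_eq trace_def sum_2 distrib_left[symmetric])
  moreover have "det ?J = (c^3)^2 * det (ibr_jacobian A (vector [u0, v0, 1]))"
    by (simp add: J_eq det_2 power2_eq_square algebra_simps)
  then have "0 < det ?J"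
    using det_pos \<open>0 < c\<close> by simp
  moreover have "is_jacobian_at A (ratio_point u0 v0) ?J"
    using rest_points[of "ratio_point u0 v0"]
    by (intro is_jacobian_at_ibr_jacobian) (simp add: simplex_interior_def)
  ultimately have "repelling A (ratio_point u0 v0)"
    unfolding repelling_def using eigenvalue_Re_pos by blast
  then show ?thesis
    by (simp add: rest_points)
qed

section \<open>Polynomial certificates\<close>

lemma poly_nonneg_coeffs_mono:
  fixes p :: "real poly"
  assumes "\<forall>i. 0 \<le> coeff p i" and "0 \<le> v" and "v \<le> w"
  shows "0 \<le> poly p v \<and> poly p v \<le> poly p w"
  using assms(1)
proof (induction p)
  case (pCons a p)
  then have "0 \<le> a" and "0 \<le> poly p v \<and> poly p v \<le> poly p w"
    using coeff_pCons_0[of a p] coeff_pCons_Suc[of a p] by metis+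
  then show ?case
    using assms(2,3) by (auto intro: mult_mono)
qed simp

lemma poly_nonneg_coeffs_div_power_strict_antimono:
  fixes p :: "real poly"
  assumes "\<forall>i. 0 \<le> coeff p i" and "p \<noteq> 0" and "degree p < k" and "0 < v" and "v < w"
  shows "poly p w / w^k < poly p v / v^k"
  using assms(1-3)
proof (induction p arbitrary: k)
  case (pCons a p)
  then obtain k' where k: "k = Suc k'"
    by (cases k) auto
  have "0 \<le> a" and p_nonneg: "\<forall>i. 0 \<le> coeff p i"
    using pCons.prems(1) coeff_pCons_0[of a p] coeff_pCons_Suc[of a p] by metis+
  have poly_split: "poly (pCons a p) x / x^k = a / x^k + poly p x / x^k'" if "0 < x" for x
    using that by (simp add: k field_simps)
  have a_le: "a / w^k \<le> a / v^k"
    using \<open>0 \<le> a\<close> assms(4,5) by (intro divide_left_mono power_mono mult_pos_pos) auto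
  show ?case
  proof (cases "p = 0")
    case True
    then have "0 < a"
      using pCons.prems(2) \<open>0 \<le> a\<close> by simp
    then have "a / w^k < a / v^k"
      using assms(4,5) k by (intro divide_strict_left_mono power_strict_mono) auto
    then show ?thesis
      using poly_split assms(4,5) True by simp
  next
    case False
    then have "poly p w / w^k' < poly p v / v^k'"
      using pCons.IH[OF p_nonneg False] pCons.prems(3) k by simp
    then show ?thesis
      using poly_split assms(4,5) a_le by simp
  qed
qed simp

lemma poly_one_sign_change_pos_root_unique:
  fixes p q :: "real poly"
  assumes "\<forall>i. 0 \<le> coeff p i" and "\<forall>i. 0 \<le> coeff q i" and "p \<noteq> 0" and "degree p < k"
    and "0 < v" and "0 < w" and "poly p v = v^k * poly q v" and "poly p w = w^k * poly q w"
  shows "v = w"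
proof -
  define g where "g x = poly p x / x^k - poly q x" for x
  have g_zero: "g x = 0" if "0 < x" "poly p x = x^k * poly q x" for x
    using that by (simp add: g_def)
  have "g y < g x" if "0 < x" "x < y" for x y
    using poly_nonneg_coeffs_div_power_strict_antimono[OF assms(1,3,4) that]
      poly_nonneg_coeffs_mono[OF assms(2), of x y] that by (simp add: g_def)
  then show ?thesis
    using g_zero[OF assms(5,7)] g_zero[OF assms(6,8)] assms(5,6)
    by (metis less_irrefl linorder_neqE_linordered_idom)
qed

lemma nonneg_coeffs_pCons_iff:
  fixes p :: "real poly"
  shows "(\<forall>i. 0 \<le> coeff (pCons a p) i) \<longleftrightarrow> 0 \<le> a \<and> (\<forall>i. 0 \<le> coeff p i)"
  by (metis coeff_pCons_0 coeff_pCons_Suc not0_implies_Suc)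

definition box_poly :: "(real \<times> nat \<times> nat) list \<Rightarrow> real \<Rightarrow> real \<Rightarrow> real" where
  "box_poly cs t w = (\<Sum>(c, i, j) \<leftarrow> cs. c * t^i * w^j)"

lemma box_poly_simps:
  "box_poly [] t w = 0"
  "box_poly ((c, i, j) # cs) t w = c * t^i * w^j + box_poly cs t w"
  by (simp_all add: box_poly_def)

lemma box_poly_lower_bound:
  assumes "t \<in> {0..1}" and "w \<in> {0..1}"
  shows "(\<Sum>(c, i, j) \<leftarrow> cs. if i = 0 \<and> j = 0 then c else min c 0) \<le> box_poly cs t w"
proof (induction cs)
  case (Cons cij cs)
  obtain c i j where cij: "cij = (c, i, j)"
    by (cases cij) auto
  have "0 \<le> t^i * w^j" and "t^i * w^j \<le> 1"
    using assms by (auto intro: mult_le_one power_le_one)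
  then have "min c 0 \<le> c * (t^i * w^j)"
    using mult_left_mono_neg[of "t^i * w^j" 1 c] by (cases "c \<le> 0") auto
  then have "(if i = 0 \<and> j = 0 then c else min c 0) \<le> c * t^i * w^j"
    by (auto simp: mult.assoc)
  with Cons show ?case
    by (simp add: box_poly_def cij)
qed (simp add: box_poly_def)

lemma pos_on_box_by_coefficients:
  fixes f :: "real \<Rightarrow> real \<Rightarrow> real"
  assumes expand: "\<And>t w. f (u_lo + du * t) (v_lo + dv * w) = box_poly cs t w"
    and "0 < du" and "0 < dv"
    and "0 < (\<Sum>(c, i, j) \<leftarrow> cs. if i = 0 \<and> j = 0 then c else min c 0)"
    and "u \<in> {u_lo..u_lo + du}" and "v \<in> {v_lo..v_lo + dv}"
  shows "0 < f u v"
proof -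
  define t w where "t = (u - u_lo) / du" and "w = (v - v_lo) / dv"
  have "t \<in> {0..1}" and "w \<in> {0..1}"
    using assms(2,3,5,6) by (auto simp: t_def w_def field_simps)
  moreover have "f u v = box_poly cs t w"
    using expand[of t w] assms(2,3) by (simp add: t_def w_def)
  ultimately show ?thesis
    using box_poly_lower_bound[of t w cs] assms(4) by linarith
qed

lemma pos_on_interval_by_coefficients:
  fixes f :: "real \<Rightarrow> real"
  assumes "\<And>t w. f (v_lo + dv * w) = box_poly cs t w"
    and "0 < dv"
    and "0 < (\<Sum>(c, i, j) \<leftarrow> cs. if i = 0 \<and> j = 0 then c else min c 0)"
    and "v \<in> {v_lo..v_lo + dv}"
  shows "0 < f v"
  using pos_on_box_by_coefficients[where f = "\<lambda>_. f" and u_lo = 0 and du = 1 and u = 0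
      and v_lo = v_lo and dv = dv and cs = cs and v = v] assms
  by simp

text \<open>The map (F, G) \<mapsto> (R, a u + b) has determinant -a(v)^2, so where a(v) \<noteq> 0 the common
  zeros of F and G are those of the resultant R and of the polynomial a u + b, linear in u.\<close>

locale rate_elimination =
  fixes F G :: "real \<Rightarrow> real \<Rightarrow> real" and R a b :: "real \<Rightarrow> real"
    and P Q S T :: "real \<Rightarrow> real \<Rightarrow> real"
  assumes resultant_combination: "R v = P u v * F u v + Q u v * G u v"
    and linear_combination: "a v * u + b v = S u v * F u v + T u v * G u v"
    and combination_det: "Q u v * S u v - P u v * T u v = a v ^ 2"
begin

lemma common_zero_iff:
  assumes "a v \<noteq> 0"
  shows "F u v = 0 \<and> G u v = 0 \<longleftrightarrow> R v = 0 \<and> a v * u + b v = 0"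
proof -
  have "Q u v * (a v * u + b v) - T u v * R v = (Q u v * S u v - P u v * T u v) * F u v"
    and "S u v * R v - P u v * (a v * u + b v) = (Q u v * S u v - P u v * T u v) * G u v"
    unfolding linear_combination[of v u] resultant_combination[of v u] by (simp_all add: algebra_simps)
  then have "Q u v * (a v * u + b v) - T u v * R v = a v ^ 2 * F u v"
    and "S u v * R v - P u v * (a v * u + b v) = a v ^ 2 * G u v"
    by (simp_all add: combination_det)
  then show ?thesis
    using assms resultant_combination[of v u] linear_combination[of v u] by auto
qed

lemma unique_common_zero:
  assumes "0 < v_lo" and "v_lo \<le> v_hi" and "continuous_on {v_lo..v_hi} R"
    and "R v_hi \<le> 0" and "0 \<le> R v_lo"
    and R_root_unique: "\<And>v w. 0 < v \<Longrightarrow> 0 < w \<Longrightarrow> R v = 0 \<Longrightarrow> R w = 0 \<Longrightarrow> v = w"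
    and signs: "\<And>v. v \<in> {v_lo..v_hi} \<Longrightarrow> a v < 0 \<and> 0 < u_lo * a v + b v \<and> u_hi * a v + b v < 0"
  obtains u0 v0 where "u0 \<in> {u_lo..u_hi}" and "v0 \<in> {v_lo..v_hi}"
    and "\<And>u v. 0 < v \<Longrightarrow> F u v = 0 \<and> G u v = 0 \<longleftrightarrow> u = u0 \<and> v = v0"
proof -
  obtain v0 where v0: "v0 \<in> {v_lo..v_hi}" "R v0 = 0"
    using IVT2'[of R v_hi 0 v_lo, OF assms(4,5,2,3)] by auto
  have "0 < v0"
    using v0(1) assms(1) by simp
  have "a v0 < 0" and lo: "0 < u_lo * a v0 + b v0" and hi: "u_hi * a v0 + b v0 < 0"
    using signs[OF v0(1)] by auto
  define u0 where "u0 = - b v0 / a v0"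
  have u0: "a v0 * u + b v0 = 0 \<longleftrightarrow> u = u0" for u
    using \<open>a v0 < 0\<close> by (auto simp: u0_def field_simps)
  have "u_lo < u0"
    unfolding u0_def using lo \<open>a v0 < 0\<close> neg_less_divide_eq[of "a v0" u_lo "- b v0"] by simp
  moreover have "u0 < u_hi"
    unfolding u0_def using hi \<open>a v0 < 0\<close> neg_divide_less_eq[of "a v0" "- b v0" u_hi] by simp
  ultimately have u0_range: "u0 \<in> {u_lo..u_hi}"
    by simp
  have zeros: "F u v = 0 \<and> G u v = 0 \<longleftrightarrow> u = u0 \<and> v = v0" if "0 < v" for u v
  proof
    assume "F u v = 0 \<and> G u v = 0"
    then have "R v = 0"
      using resultant_combination[of v u] by simp
    then have "v = v0"
      by (rule R_root_unique[OF that \<open>0 < v0\<close> _ v0(2)])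
    then show "u = u0 \<and> v = v0"
      using \<open>F u v = 0 \<and> G u v = 0\<close> linear_combination[of v u] u0 by simp
  next
    assume "u = u0 \<and> v = v0"
    then show "F u v = 0 \<and> G u v = 0"
      using common_zero_iff[of v u] \<open>a v0 < 0\<close> v0(2) u0 by simp
  qed
  show ?thesis
    by (rule that[OF u0_range v0(1) zeros])
qed

end

section \<open>The three games\<close>

lemma ibr_rate_A1:
  "ibr_rate A1 1 (vector [u, v, 1]) = (1 - v) * (u^2 + u * (v + 1) + (v + 1)^2)"
  "ibr_rate A1 2 (vector [u, 1, 1]) = (u - 1) * (u^2 + u + 3)"
  by (simp_all add: ibr_rate_def A1_def sum_3 power2_eq_square power3_eq_cube algebra_simps)

lemma ibr_jacobian_A1_center: "ibr_jacobian A1 (vector [1, 1, 1]) = vector [vector [-7, -14], vector [12, 9]]"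
  by (simp add: ibr_jacobian_def matrix_def vec_eq_iff forall_2 coords_def simplex_tangent_def
      ibr_deriv_def ibr_rate_def ibr_rate_deriv_def A1_def sum_3 axis_def)

lemma interior_rest_points_A1:
  assumes "0 < u" and "0 < v"
  shows "ibr_rate A1 1 (vector [u, v, 1]) = 0 \<and> ibr_rate A1 2 (vector [u, v, 1]) = 0 \<longleftrightarrow> u = 1 \<and> v = 1"
proof -
  have "0 < u^2 + u * (v + 1) + (v + 1)^2"
    using assms by (intro add_pos_pos mult_pos_pos) simp_all
  then have "ibr_rate A1 1 (vector [u, v, 1]) = 0 \<longleftrightarrow> v = 1"
    by (simp add: ibr_rate_A1)
  moreover have "0 < u^2 + u + 3"
    using assms by (intro add_pos_pos) simp_all
  then have "ibr_rate A1 2 (vector [u, 1, 1]) = 0 \<longleftrightarrow> u = 1"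
    by (simp add: ibr_rate_A1)
  ultimately show ?thesis
    by auto
qed

lemma game_A1:
  "(\<exists>!x. simplex_interior x \<and> rest_point A1 x) \<and>
   (\<forall>x. simplex_interior x \<and> rest_point A1 x \<longrightarrow> repelling A1 x)"
  by (rule unique_repelling_interior_rest_point[OF _ _ interior_rest_points_A1])
    (simp_all add: ibr_jacobian_A1_center trace_def sum_2 det_2)

lemma barycenter_eq_ratio_point: "vector [1/3, 1/3, 1/3] = ratio_point 1 1"
  by (simp add: ratio_point_def vec_eq_iff forall_3)

lemma barycenter_interior_rest_point_A1:
  "simplex_interior (vector [1/3, 1/3, 1/3]) \<and> rest_point A1 (vector [1/3, 1/3, 1/3])"
  unfolding barycenter_eq_ratio_point interior_rest_point_iff
  using interior_rest_points_A1[of 1 1] by (intro exI[of _ 1]) simp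

lemma eigenvalues_A1_barycenter:
  "{z. is_eigenvalue (ibr_jacobian A1 (vector [1/3, 1/3, 1/3])) z} =
     {(1 + 2 * \<i> * complex_of_real (sqrt 26)) / 27, (1 - 2 * \<i> * complex_of_real (sqrt 26)) / 27}"
proof -
  let ?J = "ibr_jacobian A1 (vector [1/3, 1/3, 1/3])"
  define z1 z2 where "z1 = (1 + 2 * \<i> * complex_of_real (sqrt 26)) / 27"
    and "z2 = (1 - 2 * \<i> * complex_of_real (sqrt 26)) / 27"
  have "(vector [1/3, 1/3, 1/3] :: real^3) = (1/3) *s vector [1, 1, 1]"
    unfolding vec_eq_iff forall_3 by simp
  then have J: "?J = (1/3)^3 *\<^sub>R vector [vector [-7, -14], vector [12, 9]]"
    by (simp only: ibr_jacobian_scale ibr_jacobian_A1_center)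
  have tr: "trace ?J = 2/27" and dt: "det ?J = 105/729"
    by (simp_all add: J trace_def sum_2 det_2 power_divide)
  have sum12: "z1 + z2 = 2/27"
    by (simp add: z1_def z2_def field_simps)
  have prod12: "z1 * z2 = 105/729"
  proof -
    have "z1 * z2 = (1 - 4 * \<i>^2 * complex_of_real (sqrt 26)^2) / 729"
      by (simp add: z1_def z2_def algebra_simps power2_eq_square)
    also have "\<dots> = 105/729"
      by (simp flip: of_real_power)
    finally show ?thesis .
  qed
  have "(z - z1) * (z - z2) = z^2 - (z1 + z2) * z + z1 * z2" for z
    by (simp add: algebra_simps power2_eq_square)
  then have "z^2 - of_real (trace ?J) * z + of_real (det ?J) = (z - z1) * (z - z2)" for z
    unfolding tr dt sum12 prod12 by simp
  then have "is_eigenvalue ?J z \<longleftrightarrow> z = z1 \<or> z = z2" for z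
    by (simp add: is_eigenvalue_iff_char_poly_root J)
  then show ?thesis
    unfolding z1_def z2_def by blast
qed

definition resultant_A2 :: "real \<Rightarrow> real" where
  "resultant_A2 v = poly [:3, 17, 26, 2:] v - v^4 * poly [:8, 14, 1, 1:] v"

definition linear_slope_A2 :: "real \<Rightarrow> real" where
  "linear_slope_A2 v = 2 * v^2 - 4 * v - 2"

definition linear_offset_A2 :: "real \<Rightarrow> real" where
  "linear_offset_A2 v = v^4 + v^3 + 2 * v^2 - 3 * v - 1"

lemma ibr_rate_A2:
  "ibr_rate A2 1 (vector [u, v, 1]) = - (u^2 * v) + u^2 - u * v^2 + 2 * u * v + u - v^3 - v^2 + v + 1"
  "ibr_rate A2 2 (vector [u, v, 1]) = u^3 + u^2 * v - u^2 + u * v^2 + 2 * u * v + u - v^2 - v - 1"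
  by (simp_all add: ibr_rate_def A2_def sum_3 power2_eq_square power3_eq_cube algebra_simps)

lemma ibr_jacobian_A2:
  "ibr_jacobian A2 (vector [u, v, 1]) = vector [
     vector [- (u^3) - 5 * u^2 * v + u^2 - u * v^2 + 2 * u * v - u - v^3 - v^2 + v + 1,
             - (2 * u^3) - 4 * u^2 * v - 2 * u * v^2 - 4 * u * v - 2 * u],
     vector [4 * u^2 * v - 4 * u * v + 2 * v^3 + 4 * v^2 + 4 * v,
             u^3 + 3 * u^2 * v - u^2 + u * v^2 + 2 * u * v + u + v^3 - v^2 + v - 1]]"
  by (simp add: ibr_jacobian_def matrix_def vec_eq_iff forall_2 coords_def simplex_tangent_def
      ibr_deriv_def ibr_rate_def ibr_rate_deriv_def A2_def sum_3 axis_def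
      power2_eq_square power3_eq_cube algebra_simps)

text \<open>The cofactors below were computed by polynomial elimination, and the boxes enclose the rest
  point located numerically.\<close>

lemma rate_elimination_A2:
  "rate_elimination (\<lambda>u v. ibr_rate A2 1 (vector [u, v, 1])) (\<lambda>u v. ibr_rate A2 2 (vector [u, v, 1]))
     resultant_A2 linear_slope_A2 linear_offset_A2
     (\<lambda>u v. - (2 * u^2 * v^2) + 4 * u^2 * v + 2 * u^2 + u * v^4 - u * v^3 + 8 * u * v^2
        - 5 * u * v - 3 * u + 2 * v^3 + 4 * v^2 + 8 * v + 2)
     (\<lambda>u v. - (2 * u * v^3) + 6 * u * v^2 - 2 * u * v - 2 * u
        + v^5 - 2 * v^4 + 9 * v^3 - 9 * v^2 - 6 * v - 1)
     (\<lambda>u v. u - u * v - 2) (\<lambda>u v. - ((1 - v)^2))"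
  by unfold_locales (simp add: ibr_rate_A2 resultant_A2_def linear_slope_A2_def linear_offset_A2_def; algebra)+

lemma resultant_A2_pos_root_unique:
  assumes "0 < v" and "0 < w" and "resultant_A2 v = 0" and "resultant_A2 w = 0"
  shows "v = w"
  using assms poly_one_sign_change_pos_root_unique[of "[:3, 17, 26, 2:]" "[:8, 14, 1, 1:]" 4 v w]
  by (simp add: resultant_A2_def nonneg_coeffs_pCons_iff)

lemma linear_signs_A2:
  assumes "v \<in> {123/100..31/25}"
  shows "linear_slope_A2 v < 0 \<and> 0 < 31/50 * linear_slope_A2 v + linear_offset_A2 v \<and>
    69/100 * linear_slope_A2 v + linear_offset_A2 v < 0"
proof -
  have "- linear_slope_A2 (123/100 + 1/100 * w) =
      box_poly [(19471/5000, 0, 0), (-23/2500, 0, 1), (-1/5000, 0, 2)] t w" for t w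
    unfolding linear_slope_A2_def box_poly_simps
    by algebra
  then have "0 < - linear_slope_A2 v"
    by (rule pos_on_interval_by_coefficients[where f = "\<lambda>v. - linear_slope_A2 v"])
      (insert assms, simp_all)
  moreover have "31/50 * linear_slope_A2 (123/100 + 1/100 * w) + linear_offset_A2 (123/100 + 1/100 * w) =
      box_poly [(7112941/100000000, 0, 0), (1809071/12500000, 0, 1), (80037/50000000, 0, 2),
                (37/6250000, 0, 3), (1/100000000, 0, 4)] t w" for t w
    unfolding linear_slope_A2_def linear_offset_A2_def box_poly_simps
    by algebra
  then have "0 < 31/50 * linear_slope_A2 v + linear_offset_A2 v"
    by (rule pos_on_interval_by_coefficients[where f = "\<lambda>v. 31/50 * linear_slope_A2 v + linear_offset_A2 v"])
      (insert assms, simp_all)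
  moreover have "- (69/100 * linear_slope_A2 (123/100 + 1/100 * w) + linear_offset_A2 (123/100 + 1/100 * w)) =
      box_poly [(20146459/100000000, 0, 0), (-1817121/12500000, 0, 1), (-80737/50000000, 0, 2),
                (-37/6250000, 0, 3), (-1/100000000, 0, 4)] t w" for t w
    unfolding linear_slope_A2_def linear_offset_A2_def box_poly_simps
    by algebra
  then have "0 < - (69/100 * linear_slope_A2 v + linear_offset_A2 v)"
    by (rule pos_on_interval_by_coefficients[where f = "\<lambda>v. - (69/100 * linear_slope_A2 v + linear_offset_A2 v)"])
      (insert assms, simp_all)
  ultimately show ?thesis
    by linarith
qed

lemma jacobian_trace_det_pos_A2:
  assumes "u \<in> {31/50..69/100}" and "v \<in> {123/100..31/25}"
  shows "0 < trace (ibr_jacobian A2 (vector [u, v, 1])) \<and> 0 < det (ibr_jacobian A2 (vector [u, v, 1]))"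
proof
  have "trace (ibr_jacobian A2 (vector [31/50 + 7/100 * t, 123/100 + 1/100 * w, 1])) =
      box_poly [(48093/31250, 0, 0), (-1511/125000, 0, 1), (-1/5000, 0, 2), (16359/125000, 1, 0),
                (133/125000, 1, 1), (-6027/500000, 2, 0), (-49/500000, 2, 1)] t w" for t w
    unfolding ibr_jacobian_A2 trace_def sum_2 vector_2 box_poly_simps
    by algebra
  then show "0 < trace (ibr_jacobian A2 (vector [u, v, 1]))"
    by (rule pos_on_box_by_coefficients[where f = "\<lambda>u v. trace (ibr_jacobian A2 (vector [u, v, 1]))"])
      (insert assms, simp_all)
  have "det (ibr_jacobian A2 (vector [31/50 + 7/100 * t, 123/100 + 1/100 * w, 1])) =
      box_poly [(98757643775063/1000000000000, 0, 0), (1094823842293/500000000000, 0, 1),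
                (17437150737/1000000000000, 0, 2), (13026807/250000000000, 0, 3),
                (-45319/1000000000000, 0, 4), (-307/500000000000, 0, 5), (-1/1000000000000, 0, 6),
                (264454478463/20000000000, 1, 0), (145708937479/500000000000, 1, 1),
                (615586069/250000000000, 1, 2), (2486113/250000000000, 1, 3),
                (9471/500000000000, 1, 4), (7/500000000000, 1, 5), (287786230963/1000000000000, 2, 0),
                (307979553/62500000000, 2, 1), (2831367/100000000000, 2, 2), (1323/25000000000, 2, 3),
                (-49/1000000000000, 2, 4), (3150211813/500000000000, 3, 0),
                (44138269/500000000000, 3, 1), (37387/100000000000, 3, 2), (343/500000000000, 3, 3),
                (-97934389/1000000000000, 4, 0), (-295323/500000000000, 4, 1),
                (-2401/1000000000000, 4, 2), (-722701/250000000000, 5, 0),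
                (-117649/1000000000000, 6, 0)] t w" for t w
    unfolding ibr_jacobian_A2 det_2 vector_2 box_poly_simps
    by algebra
  then show "0 < det (ibr_jacobian A2 (vector [u, v, 1]))"
    by (rule pos_on_box_by_coefficients[where f = "\<lambda>u v. det (ibr_jacobian A2 (vector [u, v, 1]))"])
      (insert assms, simp_all)
qed

lemma game_A2:
  "(\<exists>!x. simplex_interior x \<and> rest_point A2 x) \<and>
   (\<forall>x. simplex_interior x \<and> rest_point A2 x \<longrightarrow> repelling A2 x)"
proof -
  obtain u0 v0 where u0: "u0 \<in> {31/50..69/100}" and v0: "v0 \<in> {123/100..31/25}"
    and zeros: "\<And>u v. 0 < v \<Longrightarrow>
      ibr_rate A2 1 (vector [u, v, 1]) = 0 \<and> ibr_rate A2 2 (vector [u, v, 1]) = 0 \<longleftrightarrow> u = u0 \<and> v = v0"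
    by (rule rate_elimination.unique_common_zero[where v_lo = "123/100" and v_hi = "31/25"
          and u_lo = "31/50" and u_hi = "69/100",
          OF rate_elimination_A2 _ _ _ _ _ resultant_A2_pos_root_unique linear_signs_A2])
      (simp_all add: resultant_A2_def power_divide continuous_intros)
  show ?thesis
    using u0 v0 zeros jacobian_trace_det_pos_A2[OF u0 v0]
    by (intro unique_repelling_interior_rest_point[of u0 v0]) auto
qed

definition resultant_A3 :: "real \<Rightarrow> real" where
  "resultant_A3 v = poly [:1, 1, 16, 8, 16:] v - v^5 * poly [:8, 1, 1:] v"

definition linear_slope_A3 :: "real \<Rightarrow> real" where
  "linear_slope_A3 v = 2 * v^2 - 6 * v"

definition linear_offset_A3 :: "real \<Rightarrow> real" where
  "linear_offset_A3 v = v^4 + v^3 - 2 * v^2 - 3 * v - 1"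

lemma ibr_rate_A3:
  "ibr_rate A3 1 (vector [u, v, 1]) = - (u^2 * v) + u^2 - u * v^2 + 2 * u * v + u - v^3 + v^2 + v + 1"
  "ibr_rate A3 2 (vector [u, v, 1]) = u^3 + u^2 * v - u^2 + u * v^2 - u - v^2 - v - 1"
  by (simp_all add: ibr_rate_def A3_def sum_3 power2_eq_square power3_eq_cube algebra_simps)

lemma ibr_jacobian_A3:
  "ibr_jacobian A3 (vector [u, v, 1]) = vector [
     vector [- (u^3) - 5 * u^2 * v + u^2 - 3 * u * v^2 + 2 * u * v - u - v^3 + v^2 + v + 1,
             - (2 * u^3) - 4 * u^2 * v - 4 * u * v^2 - 2 * u],
     vector [4 * u^2 * v + 2 * u * v^2 + 2 * v^3 + 2 * v^2 + 2 * v,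
             u^3 + 3 * u^2 * v - u^2 + 3 * u * v^2 + 2 * u * v - u + v^3 - v^2 + v - 1]]"
  by (simp add: ibr_jacobian_def matrix_def vec_eq_iff forall_2 coords_def simplex_tangent_def
      ibr_deriv_def ibr_rate_def ibr_rate_deriv_def A3_def sum_3 axis_def
      power2_eq_square power3_eq_cube algebra_simps)

lemma rate_elimination_A3:
  "rate_elimination (\<lambda>u v. ibr_rate A3 1 (vector [u, v, 1])) (\<lambda>u v. ibr_rate A3 2 (vector [u, v, 1]))
     resultant_A3 linear_slope_A3 linear_offset_A3
     (\<lambda>u v. - (2 * u^2 * v^2) + 6 * u^2 * v + u * v^4 - u * v^3 + 6 * u * v^2 - 9 * u * v - u
        + 2 * v^3 + 4 * v^2 - 4 * v + 2)
     (\<lambda>u v. - (2 * u * v^3) + 8 * u * v^2 - 6 * u * v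
        + v^5 - 2 * v^4 + 7 * v^3 - 11 * v^2 - 4 * v + 1)
     (\<lambda>u v. u - u * v - 2) (\<lambda>u v. - ((1 - v)^2))"
  by unfold_locales (simp add: ibr_rate_A3 resultant_A3_def linear_slope_A3_def linear_offset_A3_def; algebra)+

lemma resultant_A3_pos_root_unique:
  assumes "0 < v" and "0 < w" and "resultant_A3 v = 0" and "resultant_A3 w = 0"
  shows "v = w"
  using assms poly_one_sign_change_pos_root_unique[of "[:1, 1, 16, 8, 16:]" "[:8, 1, 1:]" 5 v w]
  by (simp add: resultant_A3_def nonneg_coeffs_pCons_iff)

lemma linear_signs_A3:
  assumes "v \<in> {187/100..47/25}"
  shows "linear_slope_A3 v < 0 \<and> 0 < 121/100 * linear_slope_A3 v + linear_offset_A3 v \<and>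
    13/10 * linear_slope_A3 v + linear_offset_A3 v < 0"
proof -
  have "- linear_slope_A3 (187/100 + 1/100 * w) =
      box_poly [(21131/5000, 0, 0), (-37/2500, 0, 1), (-1/5000, 0, 2)] t w" for t w
    unfolding linear_slope_A3_def box_poly_simps
    by algebra
  then have "0 < - linear_slope_A3 v"
    by (rule pos_on_interval_by_coefficients[where f = "\<lambda>v. - linear_slope_A3 v"])
      (insert assms, simp_all)
  moreover have "121/100 * linear_slope_A3 (187/100 + 1/100 * w) + linear_offset_A3 (187/100 + 1/100 * w) =
      box_poly [(5001061/100000000, 0, 0), (3494789/12500000, 0, 1), (135057/50000000, 0, 2),
                (53/6250000, 0, 3), (1/100000000, 0, 4)] t w" for t w
    unfolding linear_slope_A3_def linear_offset_A3_def box_poly_simps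
    by algebra
  then have "0 < 121/100 * linear_slope_A3 v + linear_offset_A3 v"
    by (rule pos_on_interval_by_coefficients[where f = "\<lambda>v. 121/100 * linear_slope_A3 v + linear_offset_A3 v"])
      (insert assms, simp_all)
  moreover have "- (13/10 * linear_slope_A3 (187/100 + 1/100 * w) + linear_offset_A3 (187/100 + 1/100 * w)) =
      box_poly [(33034739/100000000, 0, 0), (-3511439/12500000, 0, 1), (-135957/50000000, 0, 2),
                (-53/6250000, 0, 3), (-1/100000000, 0, 4)] t w" for t w
    unfolding linear_slope_A3_def linear_offset_A3_def box_poly_simps
    by algebra
  then have "0 < - (13/10 * linear_slope_A3 v + linear_offset_A3 v)"
    by (rule pos_on_interval_by_coefficients[where f = "\<lambda>v. - (13/10 * linear_slope_A3 v + linear_offset_A3 v)"])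
      (insert assms, simp_all)
  ultimately show ?thesis
    by linarith
qed

lemma jacobian_trace_det_pos_A3:
  assumes "u \<in> {121/100..13/10}" and "v \<in> {187/100..47/25}"
  shows "0 < trace (ibr_jacobian A3 (vector [u, v, 1])) \<and> 0 < det (ibr_jacobian A3 (vector [u, v, 1]))"
proof
  have "trace (ibr_jacobian A3 (vector [121/100 + 9/100 * t, 187/100 + 1/100 * w, 1])) =
      box_poly [(2447533/500000, 0, 0), (19559/500000, 0, 1), (-80343/250000, 1, 0),
                (-189/250000, 1, 1), (-15147/500000, 2, 0), (-81/500000, 2, 1)] t w" for t w
    unfolding ibr_jacobian_A3 trace_def sum_2 vector_2 box_poly_simps
    by algebra
  then show "0 < trace (ibr_jacobian A3 (vector [u, v, 1]))"
    by (rule pos_on_box_by_coefficients[where f = "\<lambda>u v. trace (ibr_jacobian A3 (vector [u, v, 1]))"])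
      (insert assms, simp_all)
  have "det (ibr_jacobian A3 (vector [121/100 + 9/100 * t, 187/100 + 1/100 * w, 1])) =
      box_poly [(19825181235511/25000000000, 0, 0), (3047932156159/250000000000, 0, 1),
                (2235218151/31250000000, 0, 2), (89237787/500000000000, 0, 3),
                (16747/500000000000, 0, 4), (-17/25000000000, 0, 5), (-1/1000000000000, 0, 6),
                (24855666265683/250000000000, 1, 0), (336587780187/250000000000, 1, 1),
                (3626163153/500000000000, 1, 2), (1988109/100000000000, 1, 3),
                (6813/250000000000, 1, 4), (9/500000000000, 1, 5), (1013370082317/250000000000, 2, 0),
                (19625095773/500000000000, 2, 1), (61957953/500000000000, 2, 2),
                (72009/500000000000, 2, 3), (-81/1000000000000, 2, 4), (8290610091/100000000000, 3, 0),
                (311719671/500000000000, 3, 1), (524151/500000000000, 3, 2), (729/500000000000, 3, 3),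
                (308367/7812500000, 4, 0), (1397493/500000000000, 4, 1), (-6561/1000000000000, 4, 2),
                (-15529887/500000000000, 5, 0), (-531441/1000000000000, 6, 0)] t w" for t w
    unfolding ibr_jacobian_A3 det_2 vector_2 box_poly_simps
    by algebra
  then show "0 < det (ibr_jacobian A3 (vector [u, v, 1]))"
    by (rule pos_on_box_by_coefficients[where f = "\<lambda>u v. det (ibr_jacobian A3 (vector [u, v, 1]))"])
      (insert assms, simp_all)
qed

lemma game_A3:
  "(\<exists>!x. simplex_interior x \<and> rest_point A3 x) \<and>
   (\<forall>x. simplex_interior x \<and> rest_point A3 x \<longrightarrow> repelling A3 x)"
proof -
  obtain u0 v0 where u0: "u0 \<in> {121/100..13/10}" and v0: "v0 \<in> {187/100..47/25}"
    and zeros: "\<And>u v. 0 < v \<Longrightarrow>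
      ibr_rate A3 1 (vector [u, v, 1]) = 0 \<and> ibr_rate A3 2 (vector [u, v, 1]) = 0 \<longleftrightarrow> u = u0 \<and> v = v0"
    by (rule rate_elimination.unique_common_zero[where v_lo = "187/100" and v_hi = "47/25"
          and u_lo = "121/100" and u_hi = "13/10",
          OF rate_elimination_A3 _ _ _ _ _ resultant_A3_pos_root_unique linear_signs_A3])
      (simp_all add: resultant_A3_def power_divide continuous_intros)
  show ?thesis
    using u0 v0 zeros jacobian_trace_det_pos_A3[OF u0 v0]
    by (intro unique_repelling_interior_rest_point[of u0 v0]) auto
qed

theorem proposition5:
  shows "(\<forall>A \<in> {A1, A2, A3}.
            (\<exists>!x. simplex_interior x \<and> rest_point A x) \<and>
            (\<forall>x. simplex_interior x \<and> rest_point A x \<longrightarrow> repelling A x))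
         \<and> simplex_interior (vector [1/3, 1/3, 1/3]) \<and> rest_point A1 (vector [1/3, 1/3, 1/3])
         \<and> (\<exists>J. is_jacobian_at A1 (vector [1/3, 1/3, 1/3]) J \<and>
               {z. is_eigenvalue J z} =
                 {(1 + 2 * \<i> * complex_of_real (sqrt 26)) / 27,
                  (1 - 2 * \<i> * complex_of_real (sqrt 26)) / 27})"
proof (intro conjI)
  show "\<forall>A \<in> {A1, A2, A3}. (\<exists>!x. simplex_interior x \<and> rest_point A x) \<and>
      (\<forall>x. simplex_interior x \<and> rest_point A x \<longrightarrow> repelling A x)"
    using game_A1 game_A2 game_A3 by simp
  show "simplex_interior (vector [1/3, 1/3, 1/3])" and "rest_point A1 (vector [1/3, 1/3, 1/3])"
    using barycenter_interior_rest_point_A1 by simp_all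
  have "is_jacobian_at A1 (vector [1/3, 1/3, 1/3]) (ibr_jacobian A1 (vector [1/3, 1/3, 1/3]))"
    using barycenter_interior_rest_point_A1
    by (intro is_jacobian_at_ibr_jacobian) (simp add: simplex_interior_def)
  with eigenvalues_A1_barycenter show "\<exists>J. is_jacobian_at A1 (vector [1/3, 1/3, 1/3]) J \<and>
      {z. is_eigenvalue J z} =
        {(1 + 2 * \<i> * complex_of_real (sqrt 26)) / 27, (1 - 2 * \<i> * complex_of_real (sqrt 26)) / 27}"
    by blast
qed

end
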